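(* Let $n\ge1$ be an integer, $0<\alpha\le1$ and $\frac n{n+1}<\beta<\frac{n+\alpha}{n+1}$. Let $E=\{(u_1,\dots,u_n)\in\mathbb{R}^n:|u_i|\le1,\ i=1,\dots,n\}$. Then for each $i=1,\dots,n$ $$B_i:=\int_E\frac{|u_i|^\alpha}{|u_1\cdots u_n(u_1+\dots+u_n)|^\beta}\,du_1\cdots du_n<\infty.$$ *)

theory Defs
  imports "HOL-Analysis.Analysis"
begin

end

theory Submission
  imports Defs
begin

text \<open>
  Put \<open>u\<^sub>n\<^sub>+\<^sub>1 = -(u\<^sub>1 + \<dots> + u\<^sub>n)\<close>, so that the denominator is
  \<open>|u\<^sub>1 \<cdots> u\<^sub>n\<^sub>+\<^sub>1|\<^sup>\<beta>\<close>. Let \<open>M\<close> be the largest of \<open>|u\<^sub>1|, \<dots>, |u\<^sub>n\<^sub>+\<^sub>1|\<close>.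
  The remaining \<open>n\<close> numbers are the coordinates of a vector \<open>v\<close> which is either \<open>u\<close>
  itself or \<open>u\<close> with its largest coordinate \<open>u\<^sub>k\<close> replaced by \<open>u\<^sub>n\<^sub>+\<^sub>1\<close>; the latter
  map is a shear and preserves Lebesgue measure. As \<open>|u\<^sub>i|\<^sup>\<alpha> \<le> M\<^sup>\<alpha>\<close> and all \<open>|v\<^sub>j| \<le> M \<le> n\<close>,
  the integrand is at most \<open>n \<Prod>\<^sub>j |v\<^sub>j|\<^sup>-\<^sup>e\<close> with \<open>e = \<beta> + max 0 (\<beta> - \<alpha>) / n\<close>,
  and \<open>e < 1\<close> is exactly the upper bound on \<open>\<beta>\<close>. Hence the integral is at most
  \<open>n (n + 1) (\<integral>\<^sub>-\<^sub>n\<^sup>n |z|\<^sup>-\<^sup>e dz)\<^sup>n < \<infinity>\<close>. The lower bound on \<open>\<beta>\<close> is only used for \<open>\<beta> \<ge> 0\<close>.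
\<close>

lemma powr_div_prod_le_prod_powr:
  fixes x :: "'n::finite \<Rightarrow> real" and a M \<alpha> \<beta> :: real
  defines "N \<equiv> real CARD('n)"
  assumes x_pos: "\<And>j. 0 < x j" and x_le: "\<And>j. x j \<le> M"
    and "0 \<le> a" "a \<le> M" "M \<le> N" "0 < \<alpha>" "\<alpha> \<le> 1" "0 \<le> \<beta>"
  shows "a powr \<alpha> / (M * (\<Prod>j\<in>UNIV. x j)) powr \<beta>
           \<le> N * (\<Prod>j\<in>UNIV. x j powr - (\<beta> + max 0 (\<beta> - \<alpha>) / N))"
proof -
  define \<gamma> where "\<gamma> = max 0 (\<beta> - \<alpha>)"
  define \<delta> where "\<delta> = \<alpha> + \<gamma> - \<beta>"
  have N_ge_1: "1 \<le> N" by (simp add: N_def Suc_le_eq)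
  have M_pos: "0 < M" using x_pos x_le by (meson less_le_trans)
  have \<delta>: "0 \<le> \<delta>" "\<delta> \<le> 1" using assms(6-9) by (auto simp: \<delta>_def \<gamma>_def)
  have "M powr \<delta> \<le> N powr \<delta>" using \<delta> M_pos \<open>M \<le> N\<close> by (intro powr_mono2) auto
  also have "\<dots> \<le> N" using \<delta> N_ge_1 powr_mono[of \<delta> 1 N] by simp
  finally have M_\<delta>: "M powr \<delta> \<le> N" .
  have "M powr (- \<gamma>) = (\<Prod>j\<in>(UNIV::'n set). M powr (- \<gamma> / N))"
    using M_pos N_ge_1 by (simp add: N_def powr_power)
  also have "\<dots> \<le> (\<Prod>j\<in>UNIV. x j powr (- \<gamma> / N))"
    using x_pos x_le N_ge_1 by (intro prod_mono) (auto intro!: powr_mono2' simp: \<gamma>_def)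
  finally have M_\<gamma>: "M powr (- \<gamma>) \<le> (\<Prod>j\<in>UNIV. x j powr (- \<gamma> / N))" .
  have "a powr \<alpha> \<le> M powr \<alpha>" using assms(4,5,7) by (intro powr_mono2) auto
  also have "\<dots> = M powr \<delta> * M powr (- \<gamma>) * M powr \<beta>" by (simp add: \<delta>_def powr_add[symmetric])
  also have "\<dots> \<le> N * (\<Prod>j\<in>UNIV. x j powr (- \<gamma> / N)) * M powr \<beta>"
    using M_\<delta> M_\<gamma> N_ge_1 by (intro mult_right_mono mult_mono) auto
  finally have num: "a powr \<alpha> \<le> N * (\<Prod>j\<in>UNIV. x j powr (- \<gamma> / N)) * M powr \<beta>" .
  have den: "(M * (\<Prod>j\<in>UNIV. x j)) powr \<beta> = M powr \<beta> * (\<Prod>j\<in>UNIV. x j powr \<beta>)"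
    using M_pos x_pos by (simp add: powr_mult prod_powr_distrib prod_pos)
  have "a powr \<alpha> / (M * (\<Prod>j\<in>UNIV. x j)) powr \<beta>
      \<le> N * (\<Prod>j\<in>UNIV. x j powr (- \<gamma> / N)) * M powr \<beta> / (M powr \<beta> * (\<Prod>j\<in>UNIV. x j powr \<beta>))"
    unfolding den using num M_pos x_pos by (intro divide_right_mono) (simp_all add: prod_nonneg)
  also have "\<dots> = N * (\<Prod>j\<in>UNIV. x j powr (- \<gamma> / N) * x j powr - \<beta>)"
    using M_pos x_pos by (simp add: prod.distrib powr_minus_divide prod_dividef)
  finally show ?thesis by (simp add: \<gamma>_def powr_add[symmetric] algebra_simps)
qed

lemma excess_exponent_lt_1:
  fixes N \<alpha> \<beta> :: real
  assumes "0 < N" "\<alpha> \<le> 1" "\<beta> < (N + \<alpha>) / (N + 1)"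
  shows "\<beta> + max 0 (\<beta> - \<alpha>) / N < 1"
proof -
  have "\<beta> * (N + 1) < N + \<alpha>" using assms by (simp add: pos_less_divide_eq)
  then show ?thesis using assms(1,2) by (auto simp: max_def field_simps)
qed

lemma nn_integral_lborel_prod_vec:
  fixes g :: "'n::finite \<Rightarrow> real \<Rightarrow> ennreal"
  assumes [measurable]: "\<And>j. g j \<in> borel_measurable borel"
  shows "(\<integral>\<^sup>+u. (\<Prod>j\<in>UNIV. g j (u $ j)) \<partial>lborel) = (\<Prod>j\<in>UNIV. \<integral>\<^sup>+x. g j x \<partial>lborel)"
proof -
  define ax where "ax = (\<lambda>j::'n. axis j (1::real))"
  have inj: "inj ax" by (auto intro!: injI simp: ax_def axis_eq_axis)
  have Basis: "(Basis :: (real^'n) set) = range ax" by (auto simp: Basis_vec_def ax_def)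
  define f where "f = (\<lambda>b. g (inv ax b))"
  have "(\<Prod>j\<in>UNIV. g j (u $ j)) = (\<Prod>b\<in>Basis. f b (u \<bullet> b))" for u :: "real^'n"
    by (simp add: Basis prod.reindex[OF inj] f_def inv_f_f[OF inj])
      (simp add: ax_def cart_eq_inner_axis)
  then have "(\<integral>\<^sup>+u. (\<Prod>j\<in>UNIV. g j (u $ j)) \<partial>lborel) = (\<integral>\<^sup>+u. (\<Prod>b\<in>Basis. f b (u \<bullet> b)) \<partial>lborel)"
    by simp
  also have "\<dots> = (\<Prod>b\<in>Basis. \<integral>\<^sup>+x. f b x \<partial>lborel)"
    by (rule nn_integral_lborel_prod) (simp_all add: f_def)
  also have "\<dots> = (\<Prod>j\<in>UNIV. \<integral>\<^sup>+x. g j x \<partial>lborel)"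
    by (simp add: Basis prod.reindex[OF inj] f_def inv_f_f[OF inj])
  finally show ?thesis .
qed

definition trunc_abs_powr :: "real \<Rightarrow> real \<Rightarrow> real \<Rightarrow> real" where
  "trunc_abs_powr N e z = (if \<bar>z\<bar> \<le> N then \<bar>z\<bar> powr - e else 0)"

lemma trunc_abs_powr_nonneg: "0 \<le> trunc_abs_powr N e z"
  by (simp add: trunc_abs_powr_def)

lemma borel_measurable_trunc_abs_powr [measurable]: "trunc_abs_powr N e \<in> borel_measurable borel"
  unfolding trunc_abs_powr_def by measurable

lemma nn_integral_trunc_abs_powr_finite:
  assumes "e < 1" "0 \<le> N"
  shows "(\<integral>\<^sup>+z. trunc_abs_powr N e z \<partial>lborel) < \<infinity>"
proof -
  define f where "f = (\<lambda>x::real. if x \<in> {0..N} then x powr - e else 0)"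
  have [measurable]: "f \<in> borel_measurable borel" unfolding f_def by measurable
  have "(f has_integral (N powr (1 - e) / (1 - e))) UNIV"
    unfolding f_def has_integral_restrict_UNIV
    using has_integral_powr_from_0[of "- e" N] assms by simp
  then have half: "(\<integral>\<^sup>+x. f x \<partial>lborel) = ennreal (N powr (1 - e) / (1 - e))"
    by (rule nn_integral_has_integral_lborel[rotated 2]) (auto simp: f_def)
  have reflect: "(\<integral>\<^sup>+x. f x \<partial>lborel) = (\<integral>\<^sup>+x. f (- x) \<partial>lborel)"
    using nn_integral_real_affine[of "\<lambda>x. ennreal (f x)" "-1" 0] by simp
  have "ennreal (trunc_abs_powr N e z) = ennreal (f z) + ennreal (f (- z))" for z
    by (auto simp: trunc_abs_powr_def f_def)
  then have "(\<integral>\<^sup>+z. trunc_abs_powr N e z \<partial>lborel)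
      = (\<integral>\<^sup>+x. ennreal (f x) + ennreal (f (- x)) \<partial>lborel)"
    by simp
  also have "\<dots> = (\<integral>\<^sup>+x. f x \<partial>lborel) + (\<integral>\<^sup>+x. f (- x) \<partial>lborel)"
    by (rule nn_integral_add) (auto simp: f_def)
  finally show ?thesis using half reflect by (simp add: ennreal_plus[symmetric] del: ennreal_plus)
qed

definition trunc_abs_powr_prod :: "real \<Rightarrow> real \<Rightarrow> real^'n::finite \<Rightarrow> real" where
  "trunc_abs_powr_prod N e u = (\<Prod>j\<in>UNIV. trunc_abs_powr N e (u $ j))"

lemma trunc_abs_powr_prod_nonneg: "0 \<le> trunc_abs_powr_prod N e u"
  by (simp add: trunc_abs_powr_prod_def prod_nonneg trunc_abs_powr_nonneg)

lemma borel_measurable_trunc_abs_powr_prod [measurable]: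
  "trunc_abs_powr_prod N e \<in> borel_measurable borel"
  unfolding trunc_abs_powr_prod_def by measurable

lemma nn_integral_trunc_abs_powr_prod_finite:
  assumes "e < 1" "0 \<le> N"
  shows "(\<integral>\<^sup>+u. trunc_abs_powr_prod N e u \<partial>(lborel :: (real^'n::finite) measure)) < \<infinity>"
proof -
  have "(\<integral>\<^sup>+u. trunc_abs_powr_prod N e u \<partial>(lborel :: (real^'n) measure))
      = (\<Prod>j\<in>(UNIV::'n set). \<integral>\<^sup>+x. trunc_abs_powr N e x \<partial>lborel)"
    using nn_integral_lborel_prod_vec[of "\<lambda>_ x. ennreal (trunc_abs_powr N e x)"]
    by (simp add: trunc_abs_powr_prod_def prod_ennreal trunc_abs_powr_nonneg)
  then show ?thesis
    using nn_integral_trunc_abs_powr_finite[OF assms] by (simp add: power_less_top_ennreal)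
qed

lemma nn_integral_lborel_eq_on_lines:
  fixes G H :: "real^'n::finite \<Rightarrow> ennreal"
  assumes [measurable]: "G \<in> borel_measurable borel" "H \<in> borel_measurable borel"
    and lines: "\<And>v. v $ k = 0 \<Longrightarrow>
      (\<integral>\<^sup>+y. G (v + y *\<^sub>R axis k 1) \<partial>lborel) = (\<integral>\<^sup>+y. H (v + y *\<^sub>R axis k 1) \<partial>lborel)"
  shows "(\<integral>\<^sup>+u. G u \<partial>lborel) = (\<integral>\<^sup>+u. H u \<partial>lborel)"
proof -
  interpret product_sigma_finite "\<lambda>_::real^'n. lborel :: real measure"
    by (simp add: product_sigma_finite_def sigma_finite_lborel)
  define \<iota> where "\<iota> = (\<lambda>f::real^'n \<Rightarrow> real. \<Sum>b\<in>Basis. f b *\<^sub>R b)"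
  have [measurable]: "\<iota> \<in> measurable (\<Pi>\<^sub>M b\<in>Basis. lborel) borel"
    unfolding \<iota>_def by measurable
  define I where "I = (Basis :: (real^'n) set) - {axis k 1}"
  have Basis: "(Basis :: (real^'n) set) = insert (axis k 1) I" "axis k 1 \<notin> I"
    by (auto simp: I_def Basis_vec_def)
  define line :: "(real^'n \<Rightarrow> real) \<Rightarrow> real^'n"
    where "line = (\<lambda>x. \<chi> j. if j = k then 0 else x (axis j 1))"
  have \<iota>_upd: "\<iota> (x(axis k 1 := y)) = line x + y *\<^sub>R axis k 1" for x y
  proof -
    have "\<iota> f $ j = f (axis j 1)" for f j
      by (simp add: \<iota>_def cart_eq_inner_axis inner_sum_left inner_Basis if_distrib cong: if_cong)
    then show ?thesis by (auto simp: vec_eq_iff line_def axis_def axis_eq_axis)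
  qed
  have slices: "(\<integral>\<^sup>+u. F u \<partial>lborel)
      = (\<integral>\<^sup>+x. (\<integral>\<^sup>+y. F (line x + y *\<^sub>R axis k 1) \<partial>lborel) \<partial>(\<Pi>\<^sub>M b\<in>I. lborel))"
    if [measurable]: "F \<in> borel_measurable borel" for F :: "real^'n \<Rightarrow> ennreal"
  proof -
    have "(\<integral>\<^sup>+u. F u \<partial>lborel) = (\<integral>\<^sup>+f. F (\<iota> f) \<partial>(\<Pi>\<^sub>M b\<in>Basis. lborel))"
      by (simp add: lborel_eq[where 'a="real^'n"] \<iota>_def nn_integral_distr)
    also have "\<dots> = (\<integral>\<^sup>+x. (\<integral>\<^sup>+y. F (\<iota> (x(axis k 1 := y))) \<partial>lborel) \<partial>(\<Pi>\<^sub>M b\<in>I. lborel))"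
      unfolding Basis(1) by (rule product_nn_integral_insert) (use Basis in \<open>auto simp: I_def\<close>)
    finally show ?thesis by (simp add: \<iota>_upd)
  qed
  have "line x $ k = 0" for x by (simp add: line_def)
  then show ?thesis by (simp add: slices lines)
qed

definition neg_sum_at :: "'n::finite \<Rightarrow> real^'n \<Rightarrow> real^'n" where
  "neg_sum_at k u = (\<chi> j. if j = k then - (\<Sum>i\<in>UNIV. u $ i) else u $ j)"

lemma neg_sum_at_nth: "neg_sum_at k u $ j = (if j = k then - (\<Sum>i\<in>UNIV. u $ i) else u $ j)"
  by (simp add: neg_sum_at_def)

lemma borel_measurable_neg_sum_at [measurable]:
  "neg_sum_at (k::'n::finite) \<in> borel_measurable borel"
proof -
  have "continuous_on UNIV (\<lambda>u::real^'n. if j = k then - (\<Sum>i\<in>UNIV. u $ i) else u $ j)" for j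
    by (cases "j = k") (simp_all add: continuous_intros)
  then show ?thesis
    unfolding neg_sum_at_def by (intro borel_measurable_continuous_onI continuous_on_vec_lambda)
qed

lemma nn_integral_lborel_neg_sum_at:
  fixes F :: "real^'n::finite \<Rightarrow> ennreal"
  assumes [measurable]: "F \<in> borel_measurable borel"
  shows "(\<integral>\<^sup>+u. F (neg_sum_at k u) \<partial>lborel) = (\<integral>\<^sup>+u. F u \<partial>lborel)"
proof (rule nn_integral_lborel_eq_on_lines[where k = k])
  fix v :: "real^'n" assume "v $ k = 0"
  define t where "t = (\<Sum>i\<in>UNIV. v $ i)"
  have "(\<Sum>i\<in>UNIV. (v + y *\<^sub>R axis k 1) $ i) = t + y" for y
    by (simp add: t_def sum.distrib axis_def if_distrib[where f = "(*) y"] cong: if_cong)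
  then have "neg_sum_at k (v + y *\<^sub>R axis k 1) = v + (- t + -1 * y) *\<^sub>R axis k 1" for y
    using \<open>v $ k = 0\<close> unfolding vec_eq_iff neg_sum_at_nth by (simp add: axis_def)
  then show "(\<integral>\<^sup>+y. F (neg_sum_at k (v + y *\<^sub>R axis k 1)) \<partial>lborel)
      = (\<integral>\<^sup>+y. F (v + y *\<^sub>R axis k 1) \<partial>lborel)"
    using nn_integral_real_affine[of "\<lambda>y. F (v + y *\<^sub>R axis k 1)" "-1" "- t"] by simp
qed (simp_all add: measurable_compose[OF borel_measurable_neg_sum_at])

lemma integrand_le_trunc_abs_powr_prod:
  fixes u v :: "real^'n::finite" and i :: 'n and M \<alpha> \<beta> :: real
  defines "N \<equiv> real CARD('n)"
  defines "e \<equiv> \<beta> + max 0 (\<beta> - \<alpha>) / N"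
  assumes den: "\<bar>(\<Prod>j\<in>UNIV. u $ j) * (\<Sum>j\<in>UNIV. u $ j)\<bar> = M * (\<Prod>j\<in>UNIV. \<bar>v $ j\<bar>)"
    and v_pos: "\<And>j. 0 < \<bar>v $ j\<bar>" and v_le: "\<And>j. \<bar>v $ j\<bar> \<le> M"
    and "\<bar>u $ i\<bar> \<le> M" "M \<le> N" "0 < \<alpha>" "\<alpha> \<le> 1" "0 \<le> \<beta>"
  shows "\<bar>u $ i\<bar> powr \<alpha> / \<bar>(\<Prod>j\<in>UNIV. u $ j) * (\<Sum>j\<in>UNIV. u $ j)\<bar> powr \<beta>
           \<le> N * trunc_abs_powr_prod N e v"
proof -
  have "\<bar>u $ i\<bar> powr \<alpha> / (M * (\<Prod>j\<in>UNIV. \<bar>v $ j\<bar>)) powr \<beta>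
      \<le> N * (\<Prod>j\<in>UNIV. \<bar>v $ j\<bar> powr - e)"
    unfolding N_def e_def by (rule powr_div_prod_le_prod_powr) (use assms in \<open>simp_all add: N_def\<close>)
  also have "\<dots> = N * trunc_abs_powr_prod N e v"
    using order_trans[OF v_le \<open>M \<le> N\<close>] by (simp add: trunc_abs_powr_prod_def trunc_abs_powr_def)
  finally show ?thesis unfolding den .
qed

lemma drop_largest_coordinate:
  fixes u :: "real^'n::finite"
  assumes "(\<Prod>j\<in>UNIV. u $ j) * (\<Sum>j\<in>UNIV. u $ j) \<noteq> 0"
  obtains M v where "\<bar>(\<Prod>j\<in>UNIV. u $ j) * (\<Sum>j\<in>UNIV. u $ j)\<bar> = M * (\<Prod>j\<in>UNIV. \<bar>v $ j\<bar>)"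
    and "v = u \<or> (\<exists>k. v = neg_sum_at k u)"
    and "\<And>j. 0 < \<bar>v $ j\<bar>" "\<And>j. \<bar>v $ j\<bar> \<le> M" "\<And>j. \<bar>u $ j\<bar> \<le> M" "M \<le> (\<Sum>j\<in>UNIV. \<bar>u $ j\<bar>)"
proof -
  define s where "s = (\<Sum>j\<in>UNIV. u $ j)"
  have u_nz: "\<And>j. u $ j \<noteq> 0" and "s \<noteq> 0" using assms by (auto simp: s_def)
  have s_le: "\<bar>s\<bar> \<le> (\<Sum>j\<in>UNIV. \<bar>u $ j\<bar>)" unfolding s_def by (rule sum_abs)
  obtain k where k_max: "\<And>j. \<bar>u $ j\<bar> \<le> \<bar>u $ k\<bar>"
  proof -
    have le_Max: "\<bar>u $ j\<bar> \<le> Max (range (\<lambda>j. \<bar>u $ j\<bar>))" for j by (rule Max_ge) auto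
    have "Max (range (\<lambda>j. \<bar>u $ j\<bar>)) \<in> range (\<lambda>j. \<bar>u $ j\<bar>)" by (rule Max_in) auto
    then obtain k where "Max (range (\<lambda>j. \<bar>u $ j\<bar>)) = \<bar>u $ k\<bar>" by blast
    then show thesis using le_Max that by metis
  qed
  show thesis
  proof (cases "\<bar>u $ k\<bar> \<le> \<bar>s\<bar>")
    case True
    show thesis
      by (rule that[where v = u and M = "\<bar>s\<bar>"])
        (use u_nz order_trans[OF k_max True] s_le in \<open>simp_all add: s_def abs_mult abs_prod\<close>)
  next
    case False
    define v where "v = neg_sum_at k u"
    have uk_le: "\<bar>u $ k\<bar> \<le> (\<Sum>j\<in>UNIV. \<bar>u $ j\<bar>)" by (rule member_le_sum) auto
    have v_nth: "v $ j = (if j = k then - s else u $ j)" for j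
      by (simp add: v_def neg_sum_at_nth s_def)
    have "\<bar>(\<Prod>j\<in>UNIV. u $ j) * s\<bar> = \<bar>u $ k\<bar> * (\<bar>s\<bar> * (\<Prod>j\<in>UNIV-{k}. \<bar>u $ j\<bar>))"
      by (simp add: abs_mult abs_prod prod.remove[of UNIV k])
    also have "\<bar>s\<bar> * (\<Prod>j\<in>UNIV-{k}. \<bar>u $ j\<bar>) = (\<Prod>j\<in>UNIV. \<bar>v $ j\<bar>)"
      by (simp add: v_def neg_sum_at_nth s_def prod.remove[of UNIV k])
    finally show thesis
      by (rule that[where v = v and M = "\<bar>u $ k\<bar>", unfolded s_def[symmetric]])
        (use v_nth u_nz \<open>s \<noteq> 0\<close> k_max False uk_le v_def in \<open>auto simp: abs_le_iff\<close>)
  qed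
qed

lemma integrand_le_trunc_abs_powr_prods:
  fixes u :: "real^'n::finite" and i :: 'n and \<alpha> \<beta> :: real
  defines "N \<equiv> real CARD('n)"
  defines "e \<equiv> \<beta> + max 0 (\<beta> - \<alpha>) / N"
  assumes u: "\<forall>j. \<bar>u $ j\<bar> \<le> 1" and "0 < \<alpha>" "\<alpha> \<le> 1" "0 \<le> \<beta>"
  shows "\<bar>u $ i\<bar> powr \<alpha> / \<bar>(\<Prod>j\<in>UNIV. u $ j) * (\<Sum>j\<in>UNIV. u $ j)\<bar> powr \<beta>
           \<le> N * (trunc_abs_powr_prod N e u + (\<Sum>k\<in>UNIV. trunc_abs_powr_prod N e (neg_sum_at k u)))"
    (is "?f \<le> N * ?P")
proof (cases "(\<Prod>j\<in>UNIV. u $ j) * (\<Sum>j\<in>UNIV. u $ j) = 0")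
  case True
  have "0 \<le> ?P" by (simp add: add_nonneg_nonneg sum_nonneg trunc_abs_powr_prod_nonneg)
  then show ?thesis unfolding True by (simp add: N_def)
next
  case False
  then obtain M and v :: "real^'n"
    where den: "\<bar>(\<Prod>j\<in>UNIV. u $ j) * (\<Sum>j\<in>UNIV. u $ j)\<bar> = M * (\<Prod>j\<in>UNIV. \<bar>v $ j\<bar>)"
    and v: "v = u \<or> (\<exists>k. v = neg_sum_at k u)"
    and v_pos: "\<And>j. 0 < \<bar>v $ j\<bar>" and v_le: "\<And>j. \<bar>v $ j\<bar> \<le> M"
    and u_le: "\<And>j. \<bar>u $ j\<bar> \<le> M"
    and M_le: "M \<le> (\<Sum>j\<in>UNIV. \<bar>u $ j\<bar>)"
    using drop_largest_coordinate[OF False] by blast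
  have "(\<Sum>j\<in>UNIV. \<bar>u $ j\<bar>) \<le> N"
    using u sum_mono[of UNIV "\<lambda>j. \<bar>u $ j\<bar>" "\<lambda>_. 1"] by (simp add: N_def)
  then have "M \<le> N" using M_le by linarith
  then have "?f \<le> N * trunc_abs_powr_prod N e v"
    unfolding N_def e_def using u_le assms(4-6)
    by (intro integrand_le_trunc_abs_powr_prod[OF den v_pos v_le]) (simp_all add: N_def)
  also have "trunc_abs_powr_prod N e v \<le> ?P"
    using v
  proof
    assume "v = u"
    then show ?thesis by (simp add: add_increasing2 sum_nonneg trunc_abs_powr_prod_nonneg)
  next
    assume "\<exists>k. v = neg_sum_at k u"
    then have "trunc_abs_powr_prod N e v \<le> (\<Sum>k\<in>UNIV. trunc_abs_powr_prod N e (neg_sum_at k u))"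
      by (auto intro!: member_le_sum trunc_abs_powr_prod_nonneg)
    then show ?thesis by (simp add: add_increasing trunc_abs_powr_prod_nonneg)
  qed
  finally show ?thesis by (simp add: N_def)
qed

lemma nn_integral_integrand_le_trunc_abs_powr_prod:
  fixes i :: "'n::finite" and \<alpha> \<beta> :: real
  defines "N \<equiv> real CARD('n)"
  defines "e \<equiv> \<beta> + max 0 (\<beta> - \<alpha>) / N"
  assumes "0 < \<alpha>" "\<alpha> \<le> 1" "0 \<le> \<beta>"
  shows "(\<integral>\<^sup>+ u. indicator {u :: real ^ 'n. \<forall>j. \<bar>u $ j\<bar> \<le> 1} u *
            ennreal (\<bar>u $ i\<bar> powr \<alpha> / \<bar>(\<Prod>j\<in>UNIV. u $ j) * (\<Sum>j\<in>UNIV. u $ j)\<bar> powr \<beta>) \<partial>lborel)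
         \<le> ennreal N * (1 + of_nat CARD('n))
             * (\<integral>\<^sup>+u. trunc_abs_powr_prod N e u \<partial>(lborel :: (real^'n) measure))"
proof -
  define Q :: "real^'n \<Rightarrow> real" where "Q = trunc_abs_powr_prod N e"
  have Q_shear: "(\<integral>\<^sup>+u. Q (neg_sum_at k u) \<partial>lborel) = (\<integral>\<^sup>+u. Q u \<partial>lborel)" for k
    unfolding Q_def by (rule nn_integral_lborel_neg_sum_at) measurable
  have "indicator {u. \<forall>j. \<bar>u $ j\<bar> \<le> 1} u *
      ennreal (\<bar>u $ i\<bar> powr \<alpha> / \<bar>(\<Prod>j\<in>UNIV. u $ j) * (\<Sum>j\<in>UNIV. u $ j)\<bar> powr \<beta>)
      \<le> ennreal N * (ennreal (Q u) + (\<Sum>k\<in>UNIV. ennreal (Q (neg_sum_at k u))))" for u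
  proof (cases "\<forall>j. \<bar>u $ j\<bar> \<le> 1")
    case True
    have "ennreal (\<bar>u $ i\<bar> powr \<alpha> / \<bar>(\<Prod>j\<in>UNIV. u $ j) * (\<Sum>j\<in>UNIV. u $ j)\<bar> powr \<beta>)
        \<le> ennreal (N * (Q u + (\<Sum>k\<in>UNIV. Q (neg_sum_at k u))))"
      using integrand_le_trunc_abs_powr_prods[OF True assms(3-5)]
      by (intro ennreal_leI) (simp add: Q_def N_def e_def)
    also have "\<dots> = ennreal N * (ennreal (Q u) + (\<Sum>k\<in>UNIV. ennreal (Q (neg_sum_at k u))))"
      by (simp add: N_def Q_def ennreal_mult trunc_abs_powr_prod_nonneg sum_nonneg)
    finally show ?thesis using True by simp
  qed simp
  then have "(\<integral>\<^sup>+ u. indicator {u :: real ^ 'n. \<forall>j. \<bar>u $ j\<bar> \<le> 1} u *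
            ennreal (\<bar>u $ i\<bar> powr \<alpha> / \<bar>(\<Prod>j\<in>UNIV. u $ j) * (\<Sum>j\<in>UNIV. u $ j)\<bar> powr \<beta>) \<partial>lborel)
      \<le> (\<integral>\<^sup>+ u. ennreal N * (ennreal (Q u) + (\<Sum>k\<in>UNIV. ennreal (Q (neg_sum_at k u)))) \<partial>lborel)"
    by (rule nn_integral_mono)
  also have "\<dots> = ennreal N * (1 + of_nat CARD('n)) * (\<integral>\<^sup>+u. Q u \<partial>lborel)"
    by (simp add: Q_def nn_integral_cmult nn_integral_add nn_integral_sum Q_shear[unfolded Q_def]
        algebra_simps)
  finally show ?thesis unfolding Q_def .
qed

theorem lemma5p5:
  fixes \<alpha> \<beta> :: real and i :: "'n::finite"
  assumes "0 < \<alpha>" "\<alpha> \<le> 1"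
    and "real CARD('n) / (real CARD('n) + 1) < \<beta>"
    and "\<beta> < (real CARD('n) + \<alpha>) / (real CARD('n) + 1)"
  shows "(\<integral>\<^sup>+ u. indicator {u :: real ^ 'n. \<forall>j. \<bar>u $ j\<bar> \<le> 1} u *
            ennreal (\<bar>u $ i\<bar> powr \<alpha> /
                     \<bar>(\<Prod>j\<in>UNIV. u $ j) * (\<Sum>j\<in>UNIV. u $ j)\<bar> powr \<beta>) \<partial>lborel) < \<infinity>"
proof -
  define N where "N = real CARD('n)"
  define e where "e = \<beta> + max 0 (\<beta> - \<alpha>) / N"
  have "0 \<le> \<beta>" by (rule order_trans[OF _ less_imp_le[OF assms(3)]]) simp
  have "e < 1"
    unfolding e_def using assms(2,4) by (intro excess_exponent_lt_1) (simp_all add: N_def)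
  then have "(\<integral>\<^sup>+u. trunc_abs_powr_prod N e u \<partial>(lborel :: (real^'n) measure)) < \<infinity>"
    by (rule nn_integral_trunc_abs_powr_prod_finite) (simp add: N_def)
  then show ?thesis
    using nn_integral_integrand_le_trunc_abs_powr_prod[OF assms(1,2) \<open>0 \<le> \<beta>\<close>, of i]
    by (auto simp: N_def e_def ennreal_mult_less_top ennreal_of_nat_eq_real_of_nat
        intro: le_less_trans)
qed

end
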